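(* Let $\langle E,\rightarrow\rangle$ be a computation, $b_1,b_2$ regular predicates and $b=\mathrm{reg}(b_1\vee b_2)$. The graph $S_{\max}(E)$ has the same set of consistent cuts as the slice of $\langle E,\rightarrow\rangle$ with respect to $b$.
   Context: A computation is a directed graph $\langle E, \rightarrow\rangle$ whose vertices (events) are partitioned among processes $p_1,\dots,p_n$; events on each process are totally ordered, each process has an initial event and a final event, the path relation contains Lamport's happened-before relation, and all initial (resp. final) events lie in one strongly connected component. $\top$ is the set of final events and $\mathrm{succ}(e)$ the successor of $e$ on its process. A vertex subset $C$ is a consistent cut if for every edge $(u,v)$, $v\in C$ implies $u\in C$. A predicate (evaluated on non-trivial consistent cuts) is regular if whenever consistent cuts $C_1,C_2$ satisfy it, so do $C_1\cap C_2$ and $C_1\cup C_2$. $\mathrm{reg}(c)$ is the strongest regular predicate implied by $c$. The slice with respect to a predicate $c$ is a directed graph on $E$ whose consistent cuts include every consistent cut satisfying $c$ and which has the fewest consistent cuts among all such graphs. $F_c(e)[i]$ is the earliest event on $p_i$ reachable from $e$ in the slice with respect to $c$. $F_{\max}(e)[i]$ is whichever of $F_{b_1}(e)[i]$, $F_{b_2}(e)[i]$ occurs later on $p_i$. $S_{\max}(E)$ is the directed graph on $E$ with edges from each $e\notin\top$ to $\mathrm{succ}(e)$ and from each $e$ to $F_{\max}(e)[i]$ for every $i$. *)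

theory Defs
  imports Main
begin

(* A computation: event set E, edge relation R (the graph), n processes
   indexed 0..<n, process i given by the list P i of its events in process
   order (hd = initial event, last = final event). *)

definition cuts :: "'e set \<Rightarrow> 'e rel \<Rightarrow> 'e set set" where
  "cuts V G = {C. C \<subseteq> V \<and> (\<forall>(u,v)\<in>G. v \<in> C \<longrightarrow> u \<in> C)}"

definition initials :: "nat \<Rightarrow> (nat \<Rightarrow> 'e list) \<Rightarrow> 'e set" where
  "initials n P = {hd (P i) | i. i < n}"

definition finals :: "nat \<Rightarrow> (nat \<Rightarrow> 'e list) \<Rightarrow> 'e set" where
  "finals n P = {last (P i) | i. i < n}"

definition computation :: "'e set \<Rightarrow> 'e rel \<Rightarrow> nat \<Rightarrow> (nat \<Rightarrow> 'e list) \<Rightarrow> bool" where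
  "computation E R n P \<longleftrightarrow>
     R \<subseteq> E \<times> E \<and>
     E = (\<Union>i<n. set (P i)) \<and>
     (\<forall>i<n. P i \<noteq> [] \<and> distinct (P i)) \<and>
     (\<forall>i<n. \<forall>j<n. i \<noteq> j \<longrightarrow> set (P i) \<inter> set (P j) = {}) \<and>
     (\<forall>i<n. \<forall>k l. k < l \<and> l < length (P i) \<longrightarrow> (P i ! k, P i ! l) \<in> R\<^sup>+) \<and>
     (\<forall>i<n. \<forall>j<n. (hd (P i), hd (P j)) \<in> R\<^sup>*) \<and>
     (\<forall>i<n. \<forall>j<n. (last (P i), last (P j)) \<in> R\<^sup>*)"

definition ntcc :: "'e set \<Rightarrow> 'e rel \<Rightarrow> nat \<Rightarrow> (nat \<Rightarrow> 'e list) \<Rightarrow> 'e set \<Rightarrow> bool" where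
  "ntcc E R n P C \<longleftrightarrow> C \<in> cuts E R \<and> initials n P \<subseteq> C \<and> C \<inter> finals n P = {}"

definition regular :: "'e set \<Rightarrow> 'e rel \<Rightarrow> nat \<Rightarrow> (nat \<Rightarrow> 'e list) \<Rightarrow> ('e set \<Rightarrow> bool) \<Rightarrow> bool" where
  "regular E R n P b \<longleftrightarrow>
     (\<forall>C1 C2. ntcc E R n P C1 \<and> ntcc E R n P C2 \<and> b C1 \<and> b C2
        \<longrightarrow> b (C1 \<inter> C2) \<and> b (C1 \<union> C2))"

definition reg :: "'e set \<Rightarrow> 'e rel \<Rightarrow> nat \<Rightarrow> (nat \<Rightarrow> 'e list) \<Rightarrow> ('e set \<Rightarrow> bool) \<Rightarrow> 'e set \<Rightarrow> bool" where
  "reg E R n P c C \<longleftrightarrow>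
     (\<forall>r. regular E R n P r \<and> (\<forall>D. ntcc E R n P D \<and> c D \<longrightarrow> r D) \<longrightarrow> r C)"

definition is_slice :: "'e set \<Rightarrow> 'e rel \<Rightarrow> nat \<Rightarrow> (nat \<Rightarrow> 'e list) \<Rightarrow> ('e set \<Rightarrow> bool) \<Rightarrow> 'e rel \<Rightarrow> bool" where
  "is_slice E R n P c G \<longleftrightarrow>
     G \<subseteq> E \<times> E \<and>
     {C. ntcc E R n P C \<and> c C} \<subseteq> cuts E G \<and>
     (\<forall>H. H \<subseteq> E \<times> E \<and> {C. ntcc E R n P C \<and> c C} \<subseteq> cuts E H
        \<longrightarrow> card (cuts E G) \<le> card (cuts E H))"

definition first_reach :: "'e rel \<Rightarrow> (nat \<Rightarrow> 'e list) \<Rightarrow> 'e \<Rightarrow> nat \<Rightarrow> nat" where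
  "first_reach G P e i = (LEAST k. k < length (P i) \<and> (e, P i ! k) \<in> G\<^sup>*)"

(* F_max(e)[i]: the later of F_{b1}(e)[i] and F_{b2}(e)[i], where G1, G2 are slices w.r.t. b1, b2 *)
definition Fmax :: "'e rel \<Rightarrow> 'e rel \<Rightarrow> (nat \<Rightarrow> 'e list) \<Rightarrow> 'e \<Rightarrow> nat \<Rightarrow> 'e" where
  "Fmax G1 G2 P e i = P i ! max (first_reach G1 P e i) (first_reach G2 P e i)"

definition Smax :: "'e set \<Rightarrow> nat \<Rightarrow> (nat \<Rightarrow> 'e list) \<Rightarrow> 'e rel \<Rightarrow> 'e rel \<Rightarrow> 'e rel" where
  "Smax E n P G1 G2 =
     {(P i ! k, P i ! Suc k) | i k. i < n \<and> Suc k < length (P i)}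
     \<union> {(e, Fmax G1 G2 P e i) | e i. e \<in> E \<and> i < n}"

end

theory Submission
  imports Defs
begin

text \<open>The cuts of the slice with respect to a regular predicate \<open>c\<close> are exactly the
  non-trivial cuts satisfying \<open>c\<close> together with \<open>{}\<close> and \<open>E\<close> (Birkhoff's representation
  of the finite ring of sets they form). An \<open>F\<^sub>m\<^sub>a\<^sub>x\<close>-edge from \<open>e\<close> ends on \<open>p\<^sub>i\<close> no earlier
  than \<open>F\<^sub>b\<^sub>k(e)[i]\<close>, which \<open>e\<close> reaches in the slice for \<open>b\<^sub>k\<close>; hence every cut satisfying
  \<open>b\<^sub>1\<close> or \<open>b\<^sub>2\<close> is a cut of \<open>S\<^sub>m\<^sub>a\<^sub>x\<close>, and since these cuts form a lattice, so is every cut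
  satisfying \<open>reg(b\<^sub>1 \<or> b\<^sub>2)\<close>. Conversely, a cut \<open>C\<close> of \<open>S\<^sub>m\<^sub>a\<^sub>x\<close> is the union over
  \<open>e \<in> C\<close> of the intersection of the down-sets of \<open>e\<close> in the two slices, and each such
  intersection is a cut of the slice for \<open>reg(b\<^sub>1 \<or> b\<^sub>2)\<close>.\<close>

lemma cuts_rtrancl_closed:
  assumes "C \<in> cuts V G" "(x, y) \<in> G\<^sup>*" "y \<in> C"
  shows "x \<in> C"
  using assms(2,3)
proof (induction rule: converse_rtrancl_induct)
  case (step x z)
  then show ?case using assms(1) unfolding cuts_def by blast
qed

lemma cuts_Int: "A \<in> cuts V G \<Longrightarrow> B \<in> cuts V G \<Longrightarrow> A \<inter> B \<in> cuts V G"
  unfolding cuts_def by blast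

lemma cuts_Union: "F \<subseteq> cuts V G \<Longrightarrow> \<Union>F \<in> cuts V G"
  unfolding cuts_def by blast

lemma rtrancl_predecessors_in_cuts:
  assumes "G \<subseteq> V \<times> V"
  shows "{u \<in> V. (u, e) \<in> G\<^sup>*} \<in> cuts V G"
  using assms unfolding cuts_def by (auto intro: converse_rtrancl_into_rtrancl)

lemma nth_downward_closed:
  assumes step: "\<And>m. Suc m < length xs \<Longrightarrow> xs ! Suc m \<in> C \<Longrightarrow> xs ! m \<in> C"
    and "k \<le> l" "l < length xs" "xs ! l \<in> C"
  shows "xs ! k \<in> C"
  using assms(2-4) by (induction k rule: inc_induct) (auto intro: step)

lemma finite_Inter_closed:
  assumes "finite F" "F \<noteq> {}" "F \<subseteq> L" "\<And>A B. A \<in> L \<Longrightarrow> B \<in> L \<Longrightarrow> A \<inter> B \<in> L"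
  shows "\<Inter>F \<in> L"
  using assms(1-3) by (induction F rule: finite_ne_induct) (auto intro: assms(4))

lemma finite_Union_closed:
  assumes "finite F" "F \<subseteq> L" "{} \<in> L" "\<And>A B. A \<in> L \<Longrightarrow> B \<in> L \<Longrightarrow> A \<union> B \<in> L"
  shows "\<Union>F \<in> L"
  using assms(1,2) by (induction F rule: finite_induct) (auto intro: assms(3,4))

text \<open>Birkhoff: a finite ring of sets is the set of cuts of the preorder
  ``every member containing \<open>v\<close> contains \<open>u\<close>''.\<close>

lemma ring_of_sets_eq_cuts:
  assumes "finite V" "L \<subseteq> Pow V" "{} \<in> L" "V \<in> L"
    and Int_closed: "\<And>A B. A \<in> L \<Longrightarrow> B \<in> L \<Longrightarrow> A \<inter> B \<in> L"
    and Un_closed: "\<And>A B. A \<in> L \<Longrightarrow> B \<in> L \<Longrightarrow> A \<union> B \<in> L"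
  shows "\<exists>H \<subseteq> V \<times> V. cuts V H = L"
proof (intro exI conjI)
  define H where "H = {(u, v) \<in> V \<times> V. \<forall>C\<in>L. v \<in> C \<longrightarrow> u \<in> C}"
  show "H \<subseteq> V \<times> V" unfolding H_def by auto
  show "cuts V H = L"
  proof
    show "L \<subseteq> cuts V H" using assms(2) unfolding H_def cuts_def by auto
  next
    show "cuts V H \<subseteq> L"
    proof
      fix C assume C: "C \<in> cuts V H"
      then have "C \<subseteq> V" unfolding cuts_def by auto
      define D where "D x = \<Inter>{A \<in> L. x \<in> A}" for x
      have "finite L" using assms(1,2) by (meson finite_Pow_iff finite_subset)
      have DL: "D x \<in> L" if "x \<in> V" for x
        unfolding D_def by (rule finite_Inter_closed) (use \<open>finite L\<close> that assms(4) Int_closed in auto)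
      have "D x \<subseteq> C" if "x \<in> C" for x
      proof
        fix u assume "u \<in> D x"
        then have "(u, x) \<in> H" using that \<open>C \<subseteq> V\<close> assms(4) unfolding D_def H_def by blast
        then show "u \<in> C" using C that unfolding cuts_def by blast
      qed
      then have "C = \<Union>(D ` C)" unfolding D_def by blast
      also have "\<dots> \<in> L"
        using DL \<open>C \<subseteq> V\<close> finite_subset[OF \<open>C \<subseteq> V\<close> assms(1)]
        by (intro finite_Union_closed) (auto intro: assms(3) Un_closed)
      finally show "C \<in> L" .
    qed
  qed
qed

lemma Int_Un_closed_insert_bot_top:
  assumes "A \<in> L \<union> {{}, V}" "B \<in> L \<union> {{}, V}" "L \<subseteq> Pow V"
    and "A \<in> L \<Longrightarrow> B \<in> L \<Longrightarrow> A \<inter> B \<in> L \<and> A \<union> B \<in> L"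
  shows "A \<inter> B \<in> L \<union> {{}, V} \<and> A \<union> B \<in> L \<union> {{}, V}"
proof (cases "A \<in> L \<and> B \<in> L")
  case True
  then show ?thesis using assms(4) by blast
next
  case False
  have "A \<subseteq> V" "B \<subseteq> V" using assms(1-3) by auto
  have "A = {} \<or> A = V \<or> B = {} \<or> B = V" using False assms(1,2) by blast
  then have "(A \<inter> B = A \<or> A \<inter> B = B) \<and> (A \<union> B = A \<or> A \<union> B = B)"
    using \<open>A \<subseteq> V\<close> \<open>B \<subseteq> V\<close> by blast
  then show ?thesis using assms(1,2) by metis
qed

lemma ntcc_Int_Un:
  assumes "ntcc E R n P A" "ntcc E R n P B"
  shows "ntcc E R n P (A \<inter> B)" "ntcc E R n P (A \<union> B)"
  using assms unfolding ntcc_def cuts_def by blast+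

text \<open>Some graph has exactly the cuts on the right-hand side, because they form a ring
  of sets; minimality of the slice then forces equality.\<close>

lemma slice_cuts:
  assumes "finite E" "regular E R n P c" "is_slice E R n P c G"
  shows "cuts E G = {C. ntcc E R n P C \<and> c C} \<union> {{}, E}"
proof -
  define S where "S = {C. ntcc E R n P C \<and> c C}"
  define L where "L = S \<union> {{}, E}"
  have "S \<subseteq> Pow E" unfolding S_def ntcc_def cuts_def by auto
  then have "L \<subseteq> Pow E" unfolding L_def by auto
  have S_closed: "A \<inter> B \<in> S \<and> A \<union> B \<in> S" if "A \<in> S" "B \<in> S" for A B
    using that assms(2) ntcc_Int_Un unfolding S_def regular_def by blast
  have L_closed: "A \<inter> B \<in> L \<and> A \<union> B \<in> L" if "A \<in> L" "B \<in> L" for A B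
    using Int_Un_closed_insert_bot_top[OF that[unfolded L_def] \<open>S \<subseteq> Pow E\<close> S_closed]
    unfolding L_def .
  have "{} \<in> L" "E \<in> L" unfolding L_def by simp_all
  then obtain H where "H \<subseteq> E \<times> E" "cuts E H = L"
    using ring_of_sets_eq_cuts[OF assms(1) \<open>L \<subseteq> Pow E\<close>] L_closed by blast
  moreover have "{C. ntcc E R n P C \<and> c C} \<subseteq> cuts E H"
    using \<open>cuts E H = L\<close> unfolding L_def S_def by blast
  ultimately have "card (cuts E G) \<le> card L"
    using assms(3) unfolding is_slice_def by metis
  moreover have "L \<subseteq> cuts E G" using assms(3) unfolding L_def S_def is_slice_def cuts_def by auto
  moreover have "finite (cuts E G)"
    by (rule finite_subset[of _ "Pow E"]) (use assms(1) in \<open>auto simp: cuts_def\<close>)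
  ultimately show ?thesis unfolding L_def S_def by (metis card_seteq)
qed

lemma regular_reg: "regular E R n P (reg E R n P c)"
  unfolding regular_def
proof (intro allI impI)
  fix C1 C2
  assume C: "ntcc E R n P C1 \<and> ntcc E R n P C2 \<and> reg E R n P c C1 \<and> reg E R n P c C2"
  have "r (C1 \<inter> C2) \<and> r (C1 \<union> C2)"
    if r: "regular E R n P r" "\<forall>D. ntcc E R n P D \<and> c D \<longrightarrow> r D" for r
  proof -
    have "r C1" "r C2" using C r unfolding reg_def by blast+
    then show ?thesis using C r(1) unfolding regular_def by blast
  qed
  then show "reg E R n P c (C1 \<inter> C2) \<and> reg E R n P c (C1 \<union> C2)"
    unfolding reg_def by blast
qed

lemma reg_if: "ntcc E R n P C \<Longrightarrow> c C \<Longrightarrow> reg E R n P c C"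
  unfolding reg_def by blast

lemma reg_least:
  "regular E R n P r \<Longrightarrow> (\<And>D. ntcc E R n P D \<Longrightarrow> c D \<Longrightarrow> r D) \<Longrightarrow> reg E R n P c C \<Longrightarrow> r C"
  unfolding reg_def by blast

lemma regular_cuts: "regular E R n P (\<lambda>C. C \<in> cuts V G)"
  unfolding regular_def cuts_def by blast

lemma computation_finite: "computation E R n P \<Longrightarrow> finite E"
  unfolding computation_def by auto

lemma computation_set_subset: "computation E R n P \<Longrightarrow> i < n \<Longrightarrow> set (P i) \<subseteq> E"
  unfolding computation_def by auto

lemma computation_nonempty: "computation E R n P \<Longrightarrow> i < n \<Longrightarrow> P i \<noteq> []"
  unfolding computation_def by simp

lemma computation_nth_in:
  "computation E R n P \<Longrightarrow> i < n \<Longrightarrow> k < length (P i) \<Longrightarrow> P i ! k \<in> E"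
  using computation_set_subset nth_mem by blast

lemma computation_last_in: "computation E R n P \<Longrightarrow> i < n \<Longrightarrow> last (P i) \<in> E"
  using computation_set_subset computation_nonempty last_in_set by blast

lemma computation_obtain_nth:
  assumes "computation E R n P" "e \<in> E"
  obtains i k where "i < n" "k < length (P i)" "e = P i ! k"
  using assms unfolding computation_def by (auto simp: in_set_conv_nth)

lemma computation_cuts_process_closed:
  assumes "computation E R n P" "C \<in> cuts E R" "i < n" "k \<le> l" "l < length (P i)" "P i ! l \<in> C"
  shows "P i ! k \<in> C"
proof (cases "k = l")
  case False
  then have "(P i ! k, P i ! l) \<in> R\<^sup>*"
    using assms(1,3-5) unfolding computation_def by (auto intro: trancl_into_rtrancl)
  then show ?thesis by (rule cuts_rtrancl_closed[OF assms(2) _ assms(6)])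
qed (use assms(6) in simp)

lemma slice_cuts_subset_cuts:
  assumes "computation E R n P" "regular E R n P c" "is_slice E R n P c G"
  shows "cuts E G \<subseteq> cuts E R"
  using slice_cuts[OF computation_finite[OF assms(1)] assms(2,3)] assms(1)
  unfolding computation_def ntcc_def cuts_def by auto

text \<open>The predecessors of a final event form a cut of the slice that is not
  non-trivial, so they are all of \<open>E\<close>.\<close>

lemma slice_reaches_last:
  assumes "computation E R n P" "regular E R n P c" "is_slice E R n P c G"
    and "e \<in> E" "i < n"
  shows "(e, last (P i)) \<in> G\<^sup>*"
proof -
  define D where "D = {u \<in> E. (u, last (P i)) \<in> G\<^sup>*}"
  have "G \<subseteq> E \<times> E" using assms(3) unfolding is_slice_def by blast
  then have "D \<in> cuts E G" unfolding D_def by (rule rtrancl_predecessors_in_cuts)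
  moreover have "last (P i) \<in> D" using computation_last_in[OF assms(1,5)] unfolding D_def by simp
  moreover have "last (P i) \<in> finals n P" using assms(5) unfolding finals_def by auto
  ultimately have "D = E"
    using slice_cuts[OF computation_finite[OF assms(1)] assms(2,3)] unfolding ntcc_def by auto
  then show ?thesis using assms(4) unfolding D_def by auto
qed

lemma first_reach_le: "j < length (P i) \<Longrightarrow> (e, P i ! j) \<in> G\<^sup>* \<Longrightarrow> first_reach G P e i \<le> j"
  unfolding first_reach_def by (rule Least_le) simp

lemma slice_first_reach:
  assumes "computation E R n P" "regular E R n P c" "is_slice E R n P c G"
    and "e \<in> E" "i < n"
  shows "first_reach G P e i < length (P i)" "(e, P i ! first_reach G P e i) \<in> G\<^sup>*"
proof -
  have "P i \<noteq> []" using assms(1,5) by (rule computation_nonempty)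
  then have "length (P i) - 1 < length (P i) \<and> (e, P i ! (length (P i) - 1)) \<in> G\<^sup>*"
    using slice_reaches_last[OF assms] by (simp add: last_conv_nth)
  then have "first_reach G P e i < length (P i) \<and> (e, P i ! first_reach G P e i) \<in> G\<^sup>*"
    unfolding first_reach_def by (rule LeastI)
  then show "first_reach G P e i < length (P i)" "(e, P i ! first_reach G P e i) \<in> G\<^sup>*"
    by blast+
qed

lemma Smax_commute: "Smax E n P G1 G2 = Smax E n P G2 G1"
  unfolding Smax_def Fmax_def by (simp add: max.commute)

lemma cuts_Smax_process_closed:
  assumes "C \<in> cuts E (Smax E n P G1 G2)" "i < n" "k \<le> l" "l < length (P i)" "P i ! l \<in> C"
  shows "P i ! k \<in> C"
proof (rule nth_downward_closed[OF _ assms(3-5)])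
  fix m assume "Suc m < length (P i)" "P i ! Suc m \<in> C"
  moreover have "(P i ! m, P i ! Suc m) \<in> Smax E n P G1 G2"
    using \<open>Suc m < length (P i)\<close> assms(2) unfolding Smax_def by blast
  ultimately show "P i ! m \<in> C" using assms(1) unfolding cuts_def by blast
qed

lemma cuts_Smax_Fmax_closed:
  "C \<in> cuts E (Smax E n P G1 G2) \<Longrightarrow> e \<in> E \<Longrightarrow> i < n \<Longrightarrow> Fmax G1 G2 P e i \<in> C \<Longrightarrow> e \<in> C"
  unfolding Smax_def cuts_def by blast

lemma slice_cuts_subset_cuts_Smax:
  assumes comp: "computation E R n P"
    and "regular E R n P b1" "is_slice E R n P b1 G1"
    and "regular E R n P b2" "is_slice E R n P b2 G2"
  shows "cuts E G1 \<subseteq> cuts E (Smax E n P G1 G2)"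
proof
  fix C assume C: "C \<in> cuts E G1"
  then have "C \<in> cuts E R" using slice_cuts_subset_cuts[OF comp assms(2,3)] by blast
  have "u \<in> C" if edge: "(u, v) \<in> Smax E n P G1 G2" and "v \<in> C" for u v
    using edge unfolding Smax_def
  proof safe
    fix i k assume "v = P i ! Suc k" "i < n" "Suc k < length (P i)"
    then show "P i ! k \<in> C"
      using computation_cuts_process_closed[OF comp \<open>C \<in> cuts E R\<close>, of i k "Suc k"] \<open>v \<in> C\<close>
      by simp
  next
    fix e i assume "v = Fmax G1 G2 P e i" "e \<in> E" "i < n"
    let ?k1 = "first_reach G1 P e i" and ?k2 = "first_reach G2 P e i"
    have "max ?k1 ?k2 < length (P i)"
      using slice_first_reach(1)[OF comp assms(2,3)] slice_first_reach(1)[OF comp assms(4,5)]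
        \<open>e \<in> E\<close> \<open>i < n\<close> by simp
    then have "P i ! ?k1 \<in> C"
      using computation_cuts_process_closed[OF comp \<open>C \<in> cuts E R\<close> \<open>i < n\<close>, of ?k1 "max ?k1 ?k2"]
        \<open>v \<in> C\<close> \<open>v = _\<close>
      unfolding Fmax_def by simp
    then show "e \<in> C"
      using cuts_rtrancl_closed[OF C slice_first_reach(2)[OF comp assms(2,3) \<open>e \<in> E\<close> \<open>i < n\<close>]]
      by blast
  qed
  moreover have "C \<subseteq> E" using C unfolding cuts_def by blast
  ultimately show "C \<in> cuts E (Smax E n P G1 G2)" unfolding cuts_def by blast
qed

lemma cuts_Smax_eq_Union:
  assumes comp: "computation E R n P" and C: "C \<in> cuts E (Smax E n P G1 G2)"
  shows "C = (\<Union>e\<in>C. {u \<in> E. (u, e) \<in> G1\<^sup>*} \<inter> {u \<in> E. (u, e) \<in> G2\<^sup>*})"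
proof
  show "C \<subseteq> (\<Union>e\<in>C. {u \<in> E. (u, e) \<in> G1\<^sup>*} \<inter> {u \<in> E. (u, e) \<in> G2\<^sup>*})"
    using C unfolding cuts_def by blast
next
  show "(\<Union>e\<in>C. {u \<in> E. (u, e) \<in> G1\<^sup>*} \<inter> {u \<in> E. (u, e) \<in> G2\<^sup>*}) \<subseteq> C"
  proof safe
    fix e u assume "e \<in> C" "u \<in> E" "(u, e) \<in> G1\<^sup>*" "(u, e) \<in> G2\<^sup>*"
    have "e \<in> E" using C \<open>e \<in> C\<close> unfolding cuts_def by blast
    then obtain i k where ik: "i < n" "k < length (P i)" "e = P i ! k"
      by (rule computation_obtain_nth[OF comp])
    have "max (first_reach G1 P u i) (first_reach G2 P u i) \<le> k"
      using first_reach_le[of k P i u, OF ik(2)] \<open>(u, e) \<in> G1\<^sup>*\<close> \<open>(u, e) \<in> G2\<^sup>*\<close> ik(3) by simp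
    then have "Fmax G1 G2 P u i \<in> C"
      using cuts_Smax_process_closed[OF C ik(1) _ ik(2)] \<open>e \<in> C\<close> ik(3) unfolding Fmax_def by blast
    then show "u \<in> C" using cuts_Smax_Fmax_closed[OF C \<open>u \<in> E\<close> ik(1)] by blast
  qed
qed

lemma cuts_Smax_subset:
  assumes "computation E R n P" "G1 \<subseteq> E \<times> E" "G2 \<subseteq> E \<times> E"
    and "cuts E G1 \<subseteq> cuts E G" "cuts E G2 \<subseteq> cuts E G"
  shows "cuts E (Smax E n P G1 G2) \<subseteq> cuts E G"
proof
  fix C assume "C \<in> cuts E (Smax E n P G1 G2)"
  have "{u \<in> E. (u, e) \<in> G1\<^sup>*} \<inter> {u \<in> E. (u, e) \<in> G2\<^sup>*} \<in> cuts E G" for e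
    using rtrancl_predecessors_in_cuts[OF assms(2)] rtrancl_predecessors_in_cuts[OF assms(3)]
      assms(4,5) by (blast intro: cuts_Int)
  then show "C \<in> cuts E G"
    by (subst cuts_Smax_eq_Union[OF assms(1) \<open>C \<in> _\<close>]) (auto intro: cuts_Union)
qed

theorem theorem15:
  fixes E :: "'e set" and R :: "'e rel" and n :: nat and P :: "nat \<Rightarrow> 'e list"
    and b1 b2 :: "'e set \<Rightarrow> bool" and G1 G2 G :: "'e rel"
  assumes "computation E R n P"
    and "regular E R n P b1" and "regular E R n P b2"
    and "is_slice E R n P b1 G1" and "is_slice E R n P b2 G2"
    and "is_slice E R n P (reg E R n P (\<lambda>C. b1 C \<or> b2 C)) G"
  shows "cuts E (Smax E n P G1 G2) = cuts E G"
proof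
  have fin: "finite E" using assms(1) by (rule computation_finite)
  note cuts_G = slice_cuts[OF fin regular_reg assms(6)]
  note cuts_G1 = slice_cuts[OF fin assms(2,4)] and cuts_G2 = slice_cuts[OF fin assms(3,5)]
  show "cuts E (Smax E n P G1 G2) \<subseteq> cuts E G"
    using assms(4,5) unfolding is_slice_def
    by (intro cuts_Smax_subset[OF assms(1)]) (auto simp: cuts_G cuts_G1 cuts_G2 reg_if)
  let ?K = "cuts E (Smax E n P G1 G2)"
  have "cuts E G1 \<subseteq> ?K" "cuts E G2 \<subseteq> ?K"
    using slice_cuts_subset_cuts_Smax[OF assms(1,2,4,3,5)]
      slice_cuts_subset_cuts_Smax[OF assms(1,3,5,2,4)] by (simp_all add: Smax_commute)
  then have "ntcc E R n P D \<Longrightarrow> b1 D \<or> b2 D \<Longrightarrow> D \<in> ?K" for D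
    unfolding cuts_G1 cuts_G2 by blast
  then have "reg E R n P (\<lambda>C. b1 C \<or> b2 C) C \<Longrightarrow> C \<in> ?K" for C
    by (rule reg_least[OF regular_cuts])
  moreover have "{} \<in> ?K" "E \<in> ?K"
    using computation_nth_in[OF assms(1)] unfolding Smax_def cuts_def by auto
  ultimately show "cuts E G \<subseteq> ?K" unfolding cuts_G by blast
qed

end
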